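(* Let $p$ be a prime, $m$ a positive integer, $q=p^m$, $n=q^2+1$. Let $\lambda\in\mathbb{F}_{q^2}^*$ have multiplicative order $r$, where $r\mid (q+1)$ and $\nu_2(r)=\nu_2(q+1)$. Let $\delta\in\mathbb{F}_{q^4}$ be a primitive $rn$-th root of unity with $\delta^n=\lambda$. For a positive integer $s$ with $s\mid (q^2-1)$, let $U_{s(q^2+1)}$ denote the set of all $s(q^2+1)$-th roots of unity in $\mathbb{F}_{q^4}^*$. Define $f(x)=x^{q+1}$ for $x\in U_{r(q^2+1)}$, and for $y_0$ let $f^{-1}(y_0)=\{x\in U_{r(q^2+1)}: f(x)=y_0\}$. Let $T=\{\delta^{-i}: 0\le i\le q^2\}$ and $\lambda^jT=\{\lambda^j\delta^{-i}: 0\le i\le q^2\}$ for $0\le j\le r-1$. Then $f$ maps $U_{r(q^2+1)}$ onto $U_{q^2+1}$. Moreover, for $y_0\in U_{q^2+1}$, if $f(x_0)=y_0$ for some $x_0\in U_{r(q^2+1)}$, then $f^{-1}(y_0)=\{\lambda^jx_0: 0\le j\le r-1\}$ and $|f^{-1}(y_0)\cap\lambda^jT|=1$ for every $0\le j\le r-1$.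
   Context: $\nu_2(\cdot)$ denotes the $2$-adic valuation of a positive integer. *)

theory Defs
  imports "HOL-Computational_Algebra.Computational_Algebra"
begin

definition mult_ord :: "'a::field \<Rightarrow> nat" where
  "mult_ord x = (if \<exists>k>0. x ^ k = 1 then (LEAST k. k > 0 \<and> x ^ k = 1) else 0)"

definition nu2 :: "nat \<Rightarrow> nat" where
  "nu2 n = multiplicity (2::nat) n"

definition roots_unity :: "nat \<Rightarrow> 'a::field set" where
  "roots_unity k = {x. x ^ k = 1}"

end

theory Submission
  imports Defs
begin

(* Write q + 1 = r c. Since \<nu>\<^sub>2(r) = \<nu>\<^sub>2(q + 1) the cofactor c is odd, and as
   q\<^sup>2 + 1 \<equiv> 2 (mod q + 1) it is prime to n = q\<^sup>2 + 1. The group U_(rn) is cyclic,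
   generated by \<delta>, and g = \<delta>\<^bsup>q+1\<^esup> has order exactly n, so x \<mapsto> x\<^bsup>q+1\<^esup> maps U_(rn)
   onto U_n. Its kernel is U_r = <\<lambda>>, because x\<^bsup>rc\<^esup> = x\<^bsup>rn\<^esup> = 1 forces x\<^sup>r = 1; hence the
   fibres are the \<lambda>-cosets. On \<lambda>\<^sup>j T the map is \<delta>\<^bsup>-i\<^esup> \<mapsto> g\<^bsup>-i\<^esup>, a bijection of
   {0..n-1} onto U_n, so every fibre meets \<lambda>\<^sup>j T exactly once. *)

lemma power_eq_1_iff_mult_ord_dvd:
  fixes x :: "'a::field"
  assumes "mult_ord x > 0"
  shows "x ^ i = 1 \<longleftrightarrow> mult_ord x dvd i"
proof -
  let ?P = "\<lambda>k. k > 0 \<and> x ^ k = 1"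
  have ord: "mult_ord x = (LEAST k. ?P k)" and "\<exists>k. ?P k"
    using assms unfolding mult_ord_def by (auto split: if_splits)
  then have ord_P: "?P (mult_ord x)"
    using LeastI_ex by simp
  have "x ^ i = (x ^ mult_ord x) ^ (i div mult_ord x) * x ^ (i mod mult_ord x)"
    by (simp flip: power_mult power_add)
  with ord_P have mod: "x ^ i = x ^ (i mod mult_ord x)"
    by simp
  have "x ^ (i mod mult_ord x) \<noteq> 1" if "\<not> mult_ord x dvd i"
  proof
    assume "x ^ (i mod mult_ord x) = 1"
    then have "mult_ord x \<le> i mod mult_ord x"
      using that unfolding ord by (intro Least_le) (simp add: dvd_eq_mod_eq_0)
    moreover have "i mod mult_ord x < mult_ord x"
      using ord_P by simp
    ultimately show False
      by linarith
  qed
  with mod show ?thesis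
    by (auto simp: dvd_eq_mod_eq_0)
qed

lemma roots_unity_eq_poly_roots:
  "roots_unity k = {x::'a::field. poly (monom 1 k + [:-1:]) x = 0}"
  by (auto simp: roots_unity_def poly_monom)

lemma degree_monom_minus_1: "k > 0 \<Longrightarrow> degree (monom (1::'a::field) k + [:-1:]) = k"
  by (subst degree_add_eq_left) (auto simp: degree_monom_eq)

lemma monom_minus_1_neq_0:
  assumes "k > 0"
  shows "monom (1::'a::field) k + [:-1:] \<noteq> 0"
  using degree_monom_minus_1[OF assms] assms by (metis degree_0 less_not_refl)

lemma finite_roots_unity: "k > 0 \<Longrightarrow> finite (roots_unity k :: 'a::field set)"
  unfolding roots_unity_eq_poly_roots by (intro poly_roots_finite monom_minus_1_neq_0)

lemma card_roots_unity_le: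
  assumes "k > 0"
  shows "card (roots_unity k :: 'a::field set) \<le> k"
  using card_poly_roots_bound[OF monom_minus_1_neq_0[OF assms]]
  unfolding roots_unity_eq_poly_roots degree_monom_minus_1[OF assms] .

lemma power_gcd_eq_1:
  fixes x :: "'a::field"
  assumes "x ^ a = 1" "x ^ b = 1"
  shows "x ^ gcd a b = 1"
proof (cases "a = 0")
  case False
  then obtain u v where "a * u = b * v + gcd a b"
    using bezout_nat by blast
  then have "x ^ (b * v) * x ^ gcd a b = x ^ (a * u)"
    by (simp add: power_add)
  also have "\<dots> = x ^ (b * v)"
    using assms by (simp add: power_mult)
  finally have "x ^ (b * v) * x ^ gcd a b = x ^ (b * v) * 1"
    by simp
  moreover have "x \<noteq> 0"
    using assms(1) False by (auto simp: zero_power)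
  ultimately show ?thesis by simp
qed (use assms in simp)

lemma power_eq_power_iff_mod:
  fixes g :: "'a::field"
  assumes "k > 0" and ord: "\<And>i. g ^ i = 1 \<longleftrightarrow> k dvd i"
  shows "g ^ a = g ^ b \<longleftrightarrow> a mod k = b mod k"
proof -
  have "g \<noteq> 0"
    using ord[of k] \<open>k > 0\<close> by (auto simp: zero_power)
  have "g ^ a = g ^ b \<longleftrightarrow> a mod k = b mod k" if "b \<le> a" for a b
  proof -
    have "g ^ a = g ^ b * g ^ (a - b)"
      using that by (simp flip: power_add)
    then have "g ^ a = g ^ b \<longleftrightarrow> g ^ (a - b) = 1"
      using \<open>g \<noteq> 0\<close> by auto
    with that show ?thesis
      by (simp add: ord mod_eq_dvd_iff_nat)
  qed
  then show ?thesis
    by (metis nat_le_linear)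
qed

lemma bij_betw_powers_roots_unity:
  fixes g :: "'a::field"
  assumes "k > 0" and ord: "\<And>i. g ^ i = 1 \<longleftrightarrow> k dvd i"
  shows "bij_betw (\<lambda>i. g ^ i) {..<k} (roots_unity k)"
proof -
  have inj: "inj_on (\<lambda>i. g ^ i) {..<k}"
    by (rule inj_onI) (simp add: power_eq_power_iff_mod[OF assms])
  moreover have sub: "(\<lambda>i. g ^ i) ` {..<k} \<subseteq> roots_unity k"
    using ord by (auto simp: roots_unity_def simp flip: power_mult)
  moreover have "card (roots_unity k :: 'a set) \<le> card ((\<lambda>i. g ^ i) ` {..<k})"
    using card_roots_unity_le[OF \<open>k > 0\<close>] by (simp add: card_image[OF inj])
  ultimately show ?thesis
    using card_seteq[OF finite_roots_unity[OF \<open>k > 0\<close>]] by (simp add: bij_betw_def)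
qed

lemma odd_cofactor_if_nu2_eq:
  assumes "N = r * c" "N > 0" "nu2 r = nu2 N"
  shows "odd c"
proof -
  have "r \<noteq> 0" "c \<noteq> 0" using assms by auto
  then have "multiplicity 2 N = multiplicity 2 r + multiplicity (2::nat) c"
    unfolding \<open>N = r * c\<close> by (intro prime_elem_multiplicity_mult_distrib) auto
  then have "multiplicity (2::nat) c = 0"
    using assms(3) by (simp add: nu2_def)
  then show ?thesis
    using \<open>c \<noteq> 0\<close> multiplicity_eq_zero_iff[of c 2] by simp
qed

lemma coprime_square_plus_1_odd_divisor:
  fixes q c :: nat
  assumes "c dvd q + 1" "odd c"
  shows "coprime (q^2 + 1) c"
proof (rule coprimeI)
  fix d assume d: "d dvd q^2 + 1" "d dvd c"
  have "d dvd q + 1"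
    using d(2) assms(1) by (rule dvd_trans)
  moreover have "(q^2 + 1) + 2 * q = (q + 1) * (q + 1)" "2 * q + 2 = (q + 1) * 2"
    by (simp_all add: power2_eq_square)
  ultimately have sq: "d dvd (q^2 + 1) + 2 * q" and twice: "d dvd 2 * q + 2"
    by (metis dvd_mult2)+
  from d(1) sq have "d dvd 2 * q"
    using dvd_add_right_iff by blast
  with twice have "d dvd 2"
    using dvd_add_right_iff by blast
  then have "d \<le> 2"
    by (rule dvd_imp_le) simp
  moreover have "odd d"
    using d(2) assms(2) by (metis dvd_trans)
  ultimately have "d = 1"
    by presburger
  then show "is_unit d"
    by simp
qed

(* The exponent q + 1 of the theorem appears as r * c. *)
context
  fixes \<delta> lam :: "'a::field" and r n c :: nat
  assumes ord_\<delta>: "mult_ord \<delta> = r * n" and lam: "\<delta> ^ n = lam"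
    and "0 < r" "0 < n" and coprime_n_c: "coprime n c"
begin

lemma power_generator_eq_1_iff: "\<delta> ^ i = 1 \<longleftrightarrow> r * n dvd i"
  using power_eq_1_iff_mult_ord_dvd[of \<delta>] ord_\<delta> \<open>0 < r\<close> \<open>0 < n\<close> by simp

lemma power_lam_eq_1_iff: "lam ^ i = 1 \<longleftrightarrow> r dvd i"
proof -
  have "lam ^ i = \<delta> ^ (n * i)"
    by (simp add: lam[symmetric] power_mult)
  then show ?thesis
    using \<open>0 < n\<close> by (simp add: power_generator_eq_1_iff mult.commute[of r n])
qed

lemma power_generator_exponent_eq_1_iff: "(\<delta> ^ (r * c)) ^ i = 1 \<longleftrightarrow> n dvd i"
proof -
  have "(\<delta> ^ (r * c)) ^ i = \<delta> ^ (r * (c * i))"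
    by (simp only: power_mult)
  then have "(\<delta> ^ (r * c)) ^ i = 1 \<longleftrightarrow> r * n dvd r * (c * i)"
    by (simp only: power_generator_eq_1_iff)
  also have "\<dots> \<longleftrightarrow> n dvd i"
    using \<open>0 < r\<close> coprime_n_c by (simp add: coprime_dvd_mult_right_iff)
  finally show ?thesis .
qed

lemma power_image_roots_unity:
  "(\<lambda>x. x ^ (r * c)) ` roots_unity (r * n) = (roots_unity n :: 'a set)"
proof (intro equalityI subsetI)
  fix y :: 'a assume "y \<in> (\<lambda>x. x ^ (r * c)) ` roots_unity (r * n)"
  then obtain x where x: "x ^ (r * n) = 1" and y: "y = x ^ (r * c)"
    by (auto simp: roots_unity_def)
  from y have "y ^ n = (x ^ (r * n)) ^ c"
    by (simp add: ac_simps flip: power_mult)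
  with x show "y \<in> roots_unity n"
    by (simp add: roots_unity_def)
next
  fix y :: 'a assume "y \<in> roots_unity n"
  then obtain i where "y = (\<delta> ^ (r * c)) ^ i"
    using bij_betw_powers_roots_unity[OF \<open>0 < n\<close> power_generator_exponent_eq_1_iff]
    by (auto simp: bij_betw_def)
  then have "y = (\<delta> ^ i) ^ (r * c)"
    by (metis power_mult mult.commute)
  moreover have "\<delta> ^ i \<in> roots_unity (r * n)"
    by (simp add: roots_unity_def power_generator_eq_1_iff flip: power_mult)
  ultimately show "y \<in> (\<lambda>x. x ^ (r * c)) ` roots_unity (r * n)"
    by blast
qed

lemma power_lam_mult_r_eq_1: "lam ^ (j * (r * k)) = 1"
  by (simp add: power_lam_eq_1_iff)

lemma fibre_power_roots_unity:
  assumes x0: "x0 \<in> roots_unity (r * n)"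
  shows "{x \<in> roots_unity (r * n). x ^ (r * c) = x0 ^ (r * c)} = {lam ^ j * x0 | j. j < r}"
proof
  have "x0 \<noteq> 0"
    using x0 \<open>0 < r\<close> \<open>0 < n\<close> by (auto simp: roots_unity_def zero_power)
  show "{x \<in> roots_unity (r * n). x ^ (r * c) = x0 ^ (r * c)} \<subseteq> {lam ^ j * x0 | j. j < r}"
  proof clarify
    fix x assume x: "x \<in> roots_unity (r * n)" "x ^ (r * c) = x0 ^ (r * c)"
    define z where "z = x / x0"
    have "z ^ (r * c) = 1" "z ^ (r * n) = 1"
      using x x0 \<open>x0 \<noteq> 0\<close> by (simp_all add: z_def power_divide roots_unity_def)
    then have "z ^ gcd (r * c) (r * n) = 1"
      by (rule power_gcd_eq_1)
    moreover have "gcd (r * c) (r * n) = r"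
      using coprime_n_c
      by (simp flip: gcd_mult_distrib_nat add: coprime_commute coprime_iff_gcd_eq_1)
    ultimately have "z \<in> roots_unity r"
      by (simp add: roots_unity_def)
    then obtain j where "j < r" "z = lam ^ j"
      using bij_betw_powers_roots_unity[OF \<open>0 < r\<close> power_lam_eq_1_iff]
      by (auto simp: bij_betw_def)
    moreover have "x = z * x0"
      using \<open>x0 \<noteq> 0\<close> by (simp add: z_def)
    ultimately show "\<exists>j. x = lam ^ j * x0 \<and> j < r"
      by blast
  qed
  show "{lam ^ j * x0 | j. j < r} \<subseteq> {x \<in> roots_unity (r * n). x ^ (r * c) = x0 ^ (r * c)}"
    using x0 power_lam_mult_r_eq_1
    by (auto simp: roots_unity_def power_mult_distrib simp flip: power_mult)
qed

lemma card_fibre_inter_coset: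
  assumes "y0 \<in> roots_unity n"
  shows "card ({x \<in> roots_unity (r * n). x ^ (r * c) = y0}
    \<inter> {lam ^ j * inverse \<delta> ^ i | i. i < n}) = 1"
proof -
  define g where "g = \<delta> ^ (r * c)"
  have bij: "bij_betw (\<lambda>i. g ^ i) {..<n} (roots_unity n)"
    unfolding g_def
    by (rule bij_betw_powers_roots_unity[OF \<open>0 < n\<close> power_generator_exponent_eq_1_iff])
  moreover have "inverse y0 \<in> roots_unity n"
    using assms by (simp add: roots_unity_def power_inverse)
  ultimately have "inverse y0 \<in> (\<lambda>i. g ^ i) ` {..<n}"
    by (simp add: bij_betw_def)
  then obtain i0 where i0: "i0 < n" "g ^ i0 = inverse y0"
    by auto
  have coset_power: "(lam ^ j * inverse \<delta> ^ i) ^ (r * c) = inverse (g ^ i)" for i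
    using power_lam_mult_r_eq_1[of j c]
    by (simp add: g_def power_mult_distrib power_inverse ac_simps flip: power_mult)
  have coset_root: "lam ^ j * inverse \<delta> ^ i \<in> roots_unity (r * n)" for i
    using power_lam_mult_r_eq_1[of j n] power_generator_eq_1_iff[of "i * (r * n)"]
    by (simp add: roots_unity_def power_mult_distrib power_inverse flip: power_mult)
  have "{x \<in> roots_unity (r * n). x ^ (r * c) = y0} \<inter> {lam ^ j * inverse \<delta> ^ i | i. i < n}
      = {lam ^ j * inverse \<delta> ^ i0}"
  proof (intro equalityI subsetI)
    fix x
    assume "x \<in> {x \<in> roots_unity (r * n). x ^ (r * c) = y0}
      \<inter> {lam ^ j * inverse \<delta> ^ i | i. i < n}"
    then obtain i where i: "i < n" "x = lam ^ j * inverse \<delta> ^ i" "inverse (g ^ i) = y0"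
      using coset_power by auto
    then have "g ^ i = g ^ i0"
      using i0 by auto
    with i(1) i0(1) bij have "i = i0"
      by (auto simp: bij_betw_def dest: inj_onD)
    with i(2) show "x \<in> {lam ^ j * inverse \<delta> ^ i0}"
      by simp
  qed (use i0 coset_power coset_root in auto)
  then show ?thesis
    by simp
qed

end

theorem lemma3p1:
  fixes p m q n r :: nat and lam \<delta> :: "'a::{field,finite}"
  assumes "prime p" and "m > 0" and "q = p ^ m" and "n = q^2 + 1"
    and "card (UNIV :: 'a set) = q ^ 4"
    and "lam \<noteq> 0" and "lam ^ (q^2) = lam"
    and "mult_ord lam = r"
    and "r dvd (q + 1)" and "nu2 r = nu2 (q + 1)"
    and "mult_ord \<delta> = r * n" and "\<delta> ^ n = lam"
  shows "(\<lambda>x. x ^ (q + 1)) ` (roots_unity (r * n) :: 'a set) = roots_unity n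
    \<and> (\<forall>y0 \<in> (roots_unity n :: 'a set). \<forall>x0 \<in> roots_unity (r * n). x0 ^ (q + 1) = y0 \<longrightarrow>
          {x \<in> roots_unity (r * n). x ^ (q + 1) = y0} = {lam ^ j * x0 | j. j \<le> r - 1}
        \<and> (\<forall>j \<le> r - 1. card ({x \<in> roots_unity (r * n). x ^ (q + 1) = y0}
                 \<inter> {lam ^ j * inverse \<delta> ^ i | i. i \<le> q^2}) = 1))"
proof -
  obtain c where c: "q + 1 = r * c"
    using \<open>r dvd q + 1\<close> by blast
  then have "0 < r"
    by (cases r) auto
  have "0 < n"
    using \<open>n = q^2 + 1\<close> by simp
  have "odd c"
    using odd_cofactor_if_nu2_eq[OF c] \<open>nu2 r = nu2 (q + 1)\<close> by simp
  with c have "coprime n c"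
    unfolding \<open>n = q^2 + 1\<close> by (intro coprime_square_plus_1_odd_divisor) simp_all
  note setting = \<open>mult_ord \<delta> = r * n\<close> \<open>\<delta> ^ n = lam\<close> \<open>0 < r\<close> \<open>0 < n\<close> \<open>coprime n c\<close>
  have pred_r: "j \<le> r - 1 \<longleftrightarrow> j < r" for j
    using \<open>0 < r\<close> by linarith
  have square_q: "i \<le> q^2 \<longleftrightarrow> i < n" for i
    using \<open>n = q^2 + 1\<close> by linarith
  show ?thesis
    unfolding c pred_r square_q
  proof (intro conjI ballI impI allI)
    show "(\<lambda>x. x ^ (r * c)) ` roots_unity (r * n) = (roots_unity n :: 'a set)"
      by (rule power_image_roots_unity[OF setting])
  next
    fix y0 x0 :: 'a
    assume x0: "x0 \<in> roots_unity (r * n)" and y0: "x0 ^ (r * c) = y0"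
    show "{x \<in> roots_unity (r * n). x ^ (r * c) = y0} = {lam ^ j * x0 | j. j < r}"
      using fibre_power_roots_unity[OF setting x0] unfolding y0 .
  next
    fix y0 :: 'a and j :: nat
    assume "y0 \<in> roots_unity n"
    then show "card ({x \<in> roots_unity (r * n). x ^ (r * c) = y0}
        \<inter> {lam ^ j * inverse \<delta> ^ i | i. i < n}) = 1"
      by (rule card_fibre_inter_coset[OF setting])
  qed
qed

end
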